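(* Let $k\ge1$ and $\ell\ge1$. The set $\{n\in A_{2k}:\max\mathcal{CG}(n)=F_{2k+2\ell}\}$ is exactly $\{q(j):F_{2\ell+1}+1\le j\le F_{2\ell+3}\}$; i.e. its elements occupy precisely positions $F_{2\ell+1}+1$ through $F_{2\ell+3}$ (inclusive) in the increasing enumeration of $A_{2k}$.
   Context: Fibonacci numbers: $F_1=F_2=1$, $F_{n+1}=F_n+F_{n-1}$ for $n\ge2$. Chung–Graham decomposition: every positive integer $n$ has a unique representation $n=\sum_{i\ge1}c_iF_{2i}$ with $c_i\in\{0,1,2\}$, only finitely many nonzero, such that whenever $c_i=c_j=2$ with $i<j$ there is $k$ with $i<k<j$ and $c_k=0$. Let $\mathcal{CG}(n)$ be the set of $F_{2i}$ with $c_i\neq0$. For $k\ge1$, $A_{2k}=\{n\ge1:\min\mathcal{CG}(n)=F_{2k}\}$, and $q(1)<q(2)<q(3)<\cdots$ denote the elements of $A_{2k}$ listed in increasing order. *)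

theory Defs
  imports Main "HOL-Number_Theory.Fib" "HOL-Library.Infinite_Set"
begin

text \<open>Fibonacci numbers: fib 1 = fib 2 = 1 (library function fib).\<close>

definition cg_rep :: "nat \<Rightarrow> (nat \<Rightarrow> nat) \<Rightarrow> bool" where
  "cg_rep n c \<longleftrightarrow>
     (\<forall>i. c i \<le> 2) \<and> c 0 = 0 \<and> finite {i. c i \<noteq> 0} \<and>
     n = (\<Sum>i\<in>{i. c i \<noteq> 0}. c i * fib (2 * i)) \<and>
     (\<forall>i j. 1 \<le> i \<longrightarrow> i < j \<longrightarrow> c i = 2 \<longrightarrow> c j = 2 \<longrightarrow>
        (\<exists>m. i < m \<and> m < j \<and> c m = 0))"

definition cg_digits :: "nat \<Rightarrow> nat \<Rightarrow> nat" where
  "cg_digits n = (THE c. cg_rep n c)"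

definition CG :: "nat \<Rightarrow> nat set" where
  "CG n = {fib (2 * i) | i. i \<ge> 1 \<and> cg_digits n i \<noteq> 0}"

definition A2k :: "nat \<Rightarrow> nat set" where
  "A2k k = {n. n \<ge> 1 \<and> Min (CG n) = fib (2 * k)}"

text \<open>q k j: the j-th element (1-indexed) of A_{2k} in increasing order.\<close>
definition q :: "nat \<Rightarrow> nat \<Rightarrow> nat" where
  "q k j = enumerate (A2k k) (j - 1)"

end

theory Submission
  imports Defs
begin

text \<open>
  Appending the digit 1 at position \<open>p + 1\<close> to the Chung--Graham digits of \<open>r < F(2p+2)\<close>, or the
  digit 2 when \<open>r < F(2p+1)\<close>, gives the digits of \<open>r + F(2p+2)\<close> resp. \<open>r + 2 F(2p+2)\<close>; these
  numbers fill \<open>[F(2p+2), F(2p+4))\<close>, and their CG set is that of \<open>r\<close> plus \<open>F(2p+2)\<close>. For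
  \<open>p \<ge> k\<close> this does not change the minimum, so the number \<open>N(x)\<close> of elements of \<open>A\<^sub>2\<^sub>k\<close>
  below \<open>x\<close> satisfies \<open>N(F(2p+3)) = N(F(2p+2)) + N(F(2p+1))\<close> and
  \<open>N(F(2p+4)) = 2 N(F(2p+2)) + N(F(2p+1))\<close>. From \<open>N(F(2k+1)) = 1\<close> and \<open>N(F(2k+2)) = 2\<close> this
  yields \<open>N(F(2k+2l)) = F(2l+1)\<close> and \<open>N(F(2k+2l+2)) = F(2l+3)\<close>. Since \<open>max CG(n) = F(2m)\<close>
  exactly when \<open>F(2m) \<le> n < F(2m+2)\<close>, the numbers in question are the elements of \<open>A\<^sub>2\<^sub>k\<close>
  in \<open>[F(2k+2l), F(2k+2l+2))\<close>, i.e. those of rank \<open>F(2l+1) + 1, \<dots>, F(2l+3)\<close>.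
\<close>

subsection \<open>Even-indexed Fibonacci numbers\<close>

lemma fib_even_less:
  assumes "1 \<le> i" "i < j"
  shows "fib (2 * i) < fib (2 * j)"
proof -
  obtain j' where j: "j = Suc j'" using assms by (cases j) auto
  have "fib (2 * i) \<le> fib (2 * j' + 1)" using assms j by (intro fib_mono) simp
  also have "\<dots> < fib (2 * j' + 1) + fib (2 * j')" using assms j by (simp add: fib_neq_0_nat)
  also have "\<dots> = fib (2 * j)" using j by simp
  finally show ?thesis .
qed

lemma less_fib_even: "n < fib (2 * n + 2)"
proof (induction n)
  case (Suc n)
  have "fib (2 * n + 2) < fib (2 * Suc n + 2)" using fib_even_less[of "Suc n" "Suc (Suc n)"] by simp
  with Suc show ?case by simp
qed simp

lemma fib_even_inj:
  assumes "1 \<le> i" "1 \<le> j" "fib (2 * i) = fib (2 * j)"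
  shows "i = j"
  using fib_even_less[of i j] fib_even_less[of j i] assms by (cases i j rule: linorder_cases) auto

lemma fib_even_interval:
  assumes "1 \<le> n"
  obtains m where "1 \<le> m" "fib (2 * m) \<le> n" "n < fib (2 * m + 2)"
proof -
  define m where "m = (LEAST m. n < fib (2 * m + 2))"
  have lt: "n < fib (2 * m + 2)" unfolding m_def by (rule LeastI[of _ n]) (rule less_fib_even)
  have "m \<noteq> 0" using lt assms by (intro notI) simp
  then obtain p where p: "m = Suc p" by (cases m) auto
  have "\<not> n < fib (2 * p + 2)" using not_less_Least[of p "\<lambda>m. n < fib (2 * m + 2)"] p
    unfolding m_def by simp
  then have ge: "fib (2 * m) \<le> n" using p by simp
  show ?thesis by (rule that[OF _ ge lt]) (simp add: p)
qed

subsection \<open>Chung--Graham digit strings\<close>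

definition cg_valid :: "(nat \<Rightarrow> nat) \<Rightarrow> bool" where
  "cg_valid c \<longleftrightarrow> (\<forall>i. c i \<le> 2) \<and>
     (\<forall>i j. 1 \<le> i \<longrightarrow> i < j \<longrightarrow> c i = 2 \<longrightarrow> c j = 2 \<longrightarrow> (\<exists>t. i < t \<and> t < j \<and> c t = 0))"

definition cg_supported :: "(nat \<Rightarrow> nat) \<Rightarrow> nat \<Rightarrow> bool" where
  "cg_supported c m \<longleftrightarrow> c 0 = 0 \<and> (\<forall>i>m. c i = 0)"

text \<open>Every 2 among the digits \<open>1..m\<close> is followed by a 0 at a position \<open>\<le> m\<close>: a digit 2 may then
  be placed at position \<open>m + 1\<close>, and the value stays below \<open>F(2m+1)\<close>.\<close>

definition cg_free :: "(nat \<Rightarrow> nat) \<Rightarrow> nat \<Rightarrow> bool" where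
  "cg_free c m \<longleftrightarrow> (\<forall>i. 1 \<le> i \<longrightarrow> i \<le> m \<longrightarrow> c i = 2 \<longrightarrow> (\<exists>t. i < t \<and> t \<le> m \<and> c t = 0))"

definition cg_value :: "(nat \<Rightarrow> nat) \<Rightarrow> nat \<Rightarrow> nat" where
  "cg_value c m = (\<Sum>i = 1..m. c i * fib (2 * i))"

lemma cg_supported_nonzero: "cg_supported c p \<Longrightarrow> c i \<noteq> 0 \<Longrightarrow> 0 < i \<and> i \<le> p"
  unfolding cg_supported_def by (metis gr0I not_le)

lemma cg_supported_mono: "cg_supported c m \<Longrightarrow> m \<le> m' \<Longrightarrow> cg_supported c m'"
  by (simp add: cg_supported_def)

lemma cg_supported_upd: "cg_supported c p \<Longrightarrow> cg_supported (c(Suc p := x)) (Suc p)"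
  by (simp add: cg_supported_def)

lemma cg_value_0 [simp]: "cg_value c 0 = 0"
  by (simp add: cg_value_def)

lemma cg_value_Suc: "cg_value c (Suc m) = cg_value c m + c (Suc m) * fib (2 * m + 2)"
  by (simp add: cg_value_def)

lemma cg_value_upd:
  assumes "cg_supported c p"
  shows "cg_value (c(Suc p := x)) (Suc p) = cg_value c p + x * fib (2 * p + 2)"
proof -
  have "cg_value (c(Suc p := x)) p = cg_value c p" unfolding cg_value_def by (intro sum.cong) simp_all
  then show ?thesis by (simp add: cg_value_Suc)
qed

lemma cg_free_if_Suc_nonzero: "cg_free c (Suc m) \<Longrightarrow> c (Suc m) \<noteq> 0 \<Longrightarrow> cg_free c m"
  unfolding cg_free_def by (metis le_Suc_eq le_SucI)

lemma cg_free_if_Suc_two: "cg_valid c \<Longrightarrow> c (Suc m) = 2 \<Longrightarrow> cg_free c m"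
  unfolding cg_free_def cg_valid_def by (metis less_Suc_eq_le le_imp_less_Suc)

lemma cg_free_Suc:
  assumes "cg_supported c p"
  shows "cg_free c (Suc p)"
  unfolding cg_free_def
proof (intro allI impI)
  fix i assume "1 \<le> i" "i \<le> Suc p" "c i = 2"
  then have "i < Suc p" using cg_supported_nonzero[OF assms, of i] by simp
  moreover have "c (Suc p) = 0" using assms by (simp add: cg_supported_def)
  ultimately show "\<exists>t. i < t \<and> t \<le> Suc p \<and> c t = 0" by blast
qed

lemma cg_free_upd_1:
  assumes "cg_free c p"
  shows "cg_free (c(Suc p := 1)) (Suc p)"
  unfolding cg_free_def
proof (intro allI impI)
  fix i assume i: "1 \<le> i" "i \<le> Suc p" "(c(Suc p := 1)) i = 2"
  then have "i \<le> p" "c i = 2" by (simp_all split: if_splits)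
  then obtain t where t: "i < t" "t \<le> p" "c t = 0" using assms i(1) unfolding cg_free_def by blast
  then have "(c(Suc p := 1)) t = 0" by simp
  with t show "\<exists>t. i < t \<and> t \<le> Suc p \<and> (c(Suc p := 1)) t = 0" by (meson le_SucI)
qed

lemma cg_valid_upd_1:
  assumes "cg_valid c" "cg_supported c p"
  shows "cg_valid (c(Suc p := 1))"
  unfolding cg_valid_def
proof (intro conjI allI impI)
  fix i show "(c(Suc p := 1)) i \<le> 2" using assms(1) by (simp add: cg_valid_def)
next
  fix i j assume ij: "1 \<le> i" "i < j" "(c(Suc p := 1)) i = 2" "(c(Suc p := 1)) j = 2"
  then have ci: "c i = 2" and cj: "c j = 2" by (auto split: if_splits)
  then have "j \<le> p" using cg_supported_nonzero[OF assms(2), of j] by simp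
  obtain t where t: "i < t" "t < j" "c t = 0"
    using assms(1) ij(1,2) ci cj unfolding cg_valid_def by blast
  then have "(c(Suc p := 1)) t = 0" using \<open>j \<le> p\<close> by simp
  with t show "\<exists>t. i < t \<and> t < j \<and> (c(Suc p := 1)) t = 0" by blast
qed

lemma cg_valid_upd_2:
  assumes "cg_valid c" "cg_supported c p" "cg_free c p"
  shows "cg_valid (c(Suc p := 2))"
  unfolding cg_valid_def
proof (intro conjI allI impI)
  fix i show "(c(Suc p := 2)) i \<le> 2" using assms(1) by (simp add: cg_valid_def)
next
  fix i j assume ij: "1 \<le> i" "i < j" "(c(Suc p := 2)) i = 2" "(c(Suc p := 2)) j = 2"
  have "j \<le> Suc p"
    using ij(4) cg_supported_nonzero[OF assms(2), of j] by (cases "j = Suc p") simp_all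
  then have "i \<le> p" "c i = 2" using ij(2,3) by (simp_all split: if_splits)
  obtain t where t: "i < t" "t < j" "c t = 0"
  proof (cases "j = Suc p")
    case True
    then show ?thesis using that assms(3) ij(1) \<open>i \<le> p\<close> \<open>c i = 2\<close>
      unfolding cg_free_def by (meson le_imp_less_Suc)
  next
    case False
    then have "c j = 2" using ij(4) by simp
    then show ?thesis using that assms(1) ij(1,2) \<open>c i = 2\<close> unfolding cg_valid_def by blast
  qed
  then have "(c(Suc p := 2)) t = 0" using \<open>j \<le> Suc p\<close> by simp
  with t show "\<exists>t. i < t \<and> t < j \<and> (c(Suc p := 2)) t = 0" by blast
qed

lemma cg_value_less:
  assumes "cg_valid c"
  shows "cg_value c m < fib (2 * m + 2) \<and> (cg_free c m \<longrightarrow> cg_value c m < fib (2 * m + 1))"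
proof (induction m)
  case (Suc m)
  let ?F = "fib (2 * m + 2)"
  have fib_odd: "fib (2 * Suc m + 1) = fib (2 * m + 1) + ?F" by simp
  have fib_even: "fib (2 * Suc m + 2) = fib (2 * m + 1) + 2 * ?F" by simp
  have "fib (2 * m + 1) \<le> ?F" by (simp add: fib_mono)
  have "c (Suc m) \<le> 2" using assms by (simp add: cg_valid_def)
  then consider "c (Suc m) = 0" | "c (Suc m) = 1" | "c (Suc m) = 2" by linarith
  then show ?case
  proof cases
    case 1
    then have "cg_value c (Suc m) = cg_value c m" by (simp add: cg_value_Suc)
    then show ?thesis using Suc fib_odd fib_even by linarith
  next
    case 2
    then have v: "cg_value c (Suc m) = cg_value c m + ?F" by (simp add: cg_value_Suc)
    have "cg_free c (Suc m) \<longrightarrow> cg_value c m < fib (2 * m + 1)"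
      using Suc cg_free_if_Suc_nonzero 2 by simp
    then show ?thesis using Suc v fib_odd fib_even \<open>fib (2 * m + 1) \<le> ?F\<close> by linarith
  next
    case 3
    then have v: "cg_value c (Suc m) = cg_value c m + 2 * ?F" by (simp add: cg_value_Suc)
    have "\<not> cg_free c (Suc m)" using 3 by (auto simp: cg_free_def)
    moreover have "cg_value c m < fib (2 * m + 1)" using Suc cg_free_if_Suc_two[OF assms 3] by simp
    ultimately show ?thesis using v fib_even by linarith
  qed
qed simp

lemma digit_eq_if_sum_eq:
  fixes a b x y F :: nat
  assumes "a < F" "b < F" "a + x * F = b + y * F"
  shows "x = y"
proof -
  have "(a + x * F) div F = x" "(b + y * F) div F = y" using assms(1,2) by simp_all
  then show ?thesis using assms(3) by simp
qed

lemma cg_value_inj: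
  assumes "cg_valid c" "cg_valid d" "cg_supported c m" "cg_supported d m"
    and "cg_value c m = cg_value d m"
  shows "c = d"
proof
  fix i
  show "c i = d i"
  proof (cases "1 \<le> i \<and> i \<le> m")
    case True
    then show ?thesis
      using assms(5)
    proof (induction m)
      case (Suc m)
      have eq: "cg_value c m + c (Suc m) * fib (2 * m + 2) = cg_value d m + d (Suc m) * fib (2 * m + 2)"
        using Suc.prems(2) unfolding cg_value_Suc .
      have "cg_value c m < fib (2 * m + 2)" "cg_value d m < fib (2 * m + 2)"
        using cg_value_less[OF assms(1), of m] cg_value_less[OF assms(2), of m] by simp_all
      then have "c (Suc m) = d (Suc m)" using eq by (rule digit_eq_if_sum_eq)
      moreover from this have "cg_value c m = cg_value d m" using eq by simp
      ultimately show ?case using Suc.IH Suc.prems(1) le_Suc_eq by blast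
    qed simp
  next
    case False
    then show ?thesis
      using cg_supported_nonzero[OF assms(3), of i] cg_supported_nonzero[OF assms(4), of i]
      by (cases "c i = 0"; cases "d i = 0") auto
  qed
qed

lemma cg_exists:
  "n < fib (2 * m + 2) \<Longrightarrow> \<exists>c. cg_valid c \<and> cg_supported c m \<and> cg_value c m = n \<and>
     (n < fib (2 * m + 1) \<longrightarrow> cg_free c m)"
proof (induction m arbitrary: n)
  case 0
  then show ?case by (intro exI[of _ "\<lambda>_. 0"]) (simp add: cg_valid_def cg_supported_def cg_free_def)
next
  case (Suc m)
  let ?F = "fib (2 * m + 2)"
  have fib_odd: "fib (2 * Suc m + 1) = fib (2 * m + 1) + ?F" by simp
  have fib_even: "fib (2 * Suc m + 2) = fib (2 * m + 1) + 2 * ?F" by simp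
  have "fib (2 * m + 1) \<le> ?F" by (simp add: fib_mono)
  consider "n < ?F" | "?F \<le> n" "n < 2 * ?F" | "2 * ?F \<le> n" by linarith
  then show ?case
  proof cases
    case 1
    then obtain c where c: "cg_valid c" "cg_supported c m" "cg_value c m = n"
      using Suc.IH by blast
    then have "c (Suc m) = 0" by (simp add: cg_supported_def)
    then have "cg_value c (Suc m) = n" using c(3) by (simp add: cg_value_Suc)
    moreover have "cg_supported c (Suc m)" using c(2) by (simp add: cg_supported_def)
    ultimately show ?thesis using c(1) cg_free_Suc[OF c(2)] by blast
  next
    case 2
    then have "n - ?F < ?F" by linarith
    then obtain c where c: "cg_valid c" "cg_supported c m" "cg_value c m = n - ?F"
      "n - ?F < fib (2 * m + 1) \<longrightarrow> cg_free c m"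
      using Suc.IH by blast
    have "n < fib (2 * Suc m + 1) \<longrightarrow> cg_free (c(Suc m := 1)) (Suc m)"
      using c(4) cg_free_upd_1 fib_odd 2 by auto
    moreover have "cg_value (c(Suc m := 1)) (Suc m) = n" using c(2,3) 2 by (simp add: cg_value_upd)
    ultimately show ?thesis using cg_valid_upd_1[OF c(1,2)] cg_supported_upd[OF c(2)] by blast
  next
    case 3
    then have "n - 2 * ?F < fib (2 * m + 1)" using Suc.prems fib_even by linarith
    moreover from this have "n - 2 * ?F < ?F" using \<open>fib (2 * m + 1) \<le> ?F\<close> by linarith
    ultimately obtain c where c: "cg_valid c" "cg_supported c m" "cg_value c m = n - 2 * ?F" "cg_free c m"
      using Suc.IH by blast
    have "cg_value (c(Suc m := 2)) (Suc m) = n" using c(2,3) 3 by (simp add: cg_value_upd)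
    moreover have "\<not> n < fib (2 * Suc m + 1)" using 3 fib_odd \<open>fib (2 * m + 1) \<le> ?F\<close> by linarith
    ultimately show ?thesis using cg_valid_upd_2[OF c(1,2,4)] cg_supported_upd[OF c(2)] by blast
  qed
qed

lemma cg_rep_iff_value:
  assumes "cg_supported c m"
  shows "cg_rep n c \<longleftrightarrow> cg_valid c \<and> cg_value c m = n"
proof -
  have supp: "{i. c i \<noteq> 0} \<subseteq> {1..m}"
    using cg_supported_nonzero[OF assms] by (auto simp: Suc_le_eq)
  then have "cg_value c m = (\<Sum>i\<in>{i. c i \<noteq> 0}. c i * fib (2 * i))"
    unfolding cg_value_def by (intro sum.mono_neutral_right) auto
  moreover have "finite {i. c i \<noteq> 0}" using supp finite_subset by blast
  moreover have "c 0 = 0" using assms by (simp add: cg_supported_def)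
  ultimately show ?thesis unfolding cg_rep_def cg_valid_def by auto
qed

lemma cg_rep_supported:
  assumes "cg_rep n c"
  obtains m where "cg_supported c m"
proof -
  have fin: "finite {i. c i \<noteq> 0}" and c0: "c 0 = 0"
    using assms[unfolded cg_rep_def] by (simp_all only:)
  obtain m where m: "{i. c i \<noteq> 0} \<subseteq> {..<m}"
    using finite_nat_bounded[OF fin] by blast
  have "cg_supported c m" unfolding cg_supported_def
  proof (intro conjI allI impI)
    fix i assume "m < i"
    then show "c i = 0" using m by fastforce
  qed (rule c0)
  then show ?thesis by (rule that)
qed

lemma cg_rep_unique:
  assumes "cg_rep n c" "cg_rep n d"
  shows "c = d"
proof -
  obtain m where "cg_supported c m" using assms(1) by (rule cg_rep_supported)
  moreover obtain m' where "cg_supported d m'" using assms(2) by (rule cg_rep_supported)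
  ultimately have "cg_supported c (max m m')" "cg_supported d (max m m')"
    using cg_supported_mono by simp_all
  with assms show ?thesis using cg_value_inj cg_rep_iff_value by metis
qed

lemma cg_digits_eqI:
  assumes "cg_valid c" "cg_supported c m" "cg_value c m = n"
  shows "cg_digits n = c"
  unfolding cg_digits_def
  using assms cg_rep_iff_value cg_rep_unique by (intro the_equality) blast+

lemma cg_digits:
  assumes "n < fib (2 * m + 2)"
  shows "cg_valid (cg_digits n)" "cg_supported (cg_digits n) m" "cg_value (cg_digits n) m = n"
    and "n < fib (2 * m + 1) \<Longrightarrow> cg_free (cg_digits n) m"
  using cg_exists[OF assms] cg_digits_eqI by metis+

subsection \<open>The sets \<open>CG(n)\<close> and \<open>A\<^sub>2\<^sub>k\<close>\<close>

lemma CG_conv_digits: "CG n = (\<lambda>i. fib (2 * i)) ` {i. 1 \<le> i \<and> cg_digits n i \<noteq> 0}"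
  unfolding CG_def by blast

lemma CG_add_digit:
  assumes "r < fib (2 * p + 2)" "x \<noteq> 0" "cg_valid ((cg_digits r)(Suc p := x))"
  shows "CG (r + x * fib (2 * p + 2)) = insert (fib (2 * p + 2)) (CG r)"
proof -
  let ?c = "cg_digits r"
  have supp: "cg_supported ?c p" using cg_digits(2)[OF assms(1)] .
  have "cg_value (?c(Suc p := x)) (Suc p) = r + x * fib (2 * p + 2)"
    using cg_value_upd[OF supp] cg_digits(3)[OF assms(1)] by simp
  then have "cg_digits (r + x * fib (2 * p + 2)) = ?c(Suc p := x)"
    using assms(3) cg_supported_upd[OF supp] by (rule cg_digits_eqI[rotated 2])
  moreover have "{i. 1 \<le> i \<and> (?c(Suc p := x)) i \<noteq> 0} = insert (Suc p) {i. 1 \<le> i \<and> ?c i \<noteq> 0}"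
    using assms(2) by auto
  ultimately show ?thesis by (simp add: CG_conv_digits)
qed

lemma CG_add_fib:
  "r < fib (2 * p + 2) \<Longrightarrow> CG (r + fib (2 * p + 2)) = insert (fib (2 * p + 2)) (CG r)"
  using CG_add_digit[of r p 1] cg_valid_upd_1 cg_digits(1,2) by simp

lemma CG_add_two_fib:
  assumes "r < fib (2 * p + 1)"
  shows "CG (r + 2 * fib (2 * p + 2)) = insert (fib (2 * p + 2)) (CG r)"
proof -
  have r: "r < fib (2 * p + 2)" using assms fib_mono[of "2 * p + 1" "2 * p + 2"] by simp
  show ?thesis
    by (rule CG_add_digit[OF r _ cg_valid_upd_2[OF cg_digits(1,2)[OF r] cg_digits(4)[OF r assms]]]) simp
qed

lemma CG_less:
  assumes "r < fib (2 * p + 2)" "x \<in> CG r"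
  shows "x < fib (2 * p + 2)"
proof -
  obtain i where "x = fib (2 * i)" "1 \<le> i" "cg_digits r i \<noteq> 0"
    using assms(2) unfolding CG_def by blast
  moreover from this have "i < Suc p" using cg_supported_nonzero[OF cg_digits(2)[OF assms(1)], of i] by simp
  ultimately show ?thesis using fib_even_less[of i "Suc p"] by simp
qed

lemma CG_le:
  assumes "x \<in> CG n"
  shows "x \<le> n"
proof -
  let ?c = "cg_digits n"
  have n: "n < fib (2 * n + 2)" by (rule less_fib_even)
  obtain i where i: "x = fib (2 * i)" "1 \<le> i" "?c i \<noteq> 0"
    using assms unfolding CG_def by blast
  then have "i \<le> n" using cg_supported_nonzero[OF cg_digits(2)[OF n], of i] by simp
  have "x \<le> ?c i * fib (2 * i)" using i by simp
  also have "\<dots> \<le> cg_value ?c n"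
    unfolding cg_value_def by (rule member_le_sum) (use i \<open>i \<le> n\<close> in auto)
  also have "\<dots> = n" using cg_digits(3)[OF n] .
  finally show ?thesis .
qed

lemma finite_CG: "finite (CG n)"
  using CG_le by (metis finite_atMost finite_subset atMost_iff subsetI)

lemma CG_pos: "x \<in> CG n \<Longrightarrow> 0 < x"
  unfolding CG_def by (auto simp: fib_neq_0_nat)

lemma CG_empty_iff: "CG n = {} \<longleftrightarrow> n = 0"
proof
  assume "n = 0"
  show "CG n = {}"
  proof (rule equals0I)
    fix x assume "x \<in> CG n"
    then show False using CG_le[of x n] CG_pos[of x n] \<open>n = 0\<close> by simp
  qed
next
  let ?c = "cg_digits n"
  have n: "n < fib (2 * n + 2)" by (rule less_fib_even)
  assume "CG n = {}"
  then have "\<forall>i\<in>{1..n}. ?c i = 0" unfolding CG_def by auto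
  then show "n = 0" using cg_digits(3)[OF n] by (simp add: cg_value_def)
qed

lemma Max_CG:
  assumes "1 \<le> m" "fib (2 * m) \<le> n" "n < fib (2 * m + 2)"
  shows "Max (CG n) = fib (2 * m)"
proof (rule Max_eqI[OF finite_CG])
  let ?c = "cg_digits n"
  obtain p where m: "m = Suc p" using assms(1) by (cases m) auto
  have supp: "cg_supported ?c m" using cg_digits(2)[OF assms(3)] .
  show "x \<le> fib (2 * m)" if x: "x \<in> CG n" for x
  proof -
    obtain i where "x = fib (2 * i)" "?c i \<noteq> 0" using x unfolding CG_def by blast
    then show ?thesis using cg_supported_nonzero[OF supp, of i] fib_mono[of "2 * i" "2 * m"] by simp
  qed
  have "?c m \<noteq> 0"
  proof
    assume "?c m = 0"
    then have "cg_value ?c p = n" using cg_digits(3)[OF assms(3)] by (simp add: m cg_value_Suc)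
    then show False
      using cg_value_less[OF cg_digits(1)[OF assms(3)], of p] assms(2) m by simp
  qed
  then show "fib (2 * m) \<in> CG n" using assms(1) unfolding CG_def by blast
qed

lemma Max_CG_eq_fib_iff:
  assumes "1 \<le> m" "1 \<le> n"
  shows "Max (CG n) = fib (2 * m) \<longleftrightarrow> fib (2 * m) \<le> n \<and> n < fib (2 * m + 2)"
proof
  assume max: "Max (CG n) = fib (2 * m)"
  obtain m' where m': "1 \<le> m'" "fib (2 * m') \<le> n" "n < fib (2 * m' + 2)"
    using fib_even_interval[OF assms(2)] .
  then have "fib (2 * m') = fib (2 * m)" using Max_CG max by simp
  then have "m' = m" using fib_even_inj m'(1) assms(1) by blast
  then show "fib (2 * m) \<le> n \<and> n < fib (2 * m + 2)" using m' by simp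
qed (use Max_CG assms(1) in blast)

lemma Min_CG_less:
  assumes "0 < r" "r < fib (2 * p + 2)"
  shows "Min (CG r) < fib (2 * p + 2)"
  using CG_less[OF assms(2)] Min_in[OF finite_CG] CG_empty_iff assms(1) by simp

lemma Min_CG_insert:
  assumes "r < fib (2 * p + 2)" "CG s = insert (fib (2 * p + 2)) (CG r)"
  shows "Min (CG s) = (if r = 0 then fib (2 * p + 2) else Min (CG r))"
proof (cases "r = 0")
  case False
  then have "CG r \<noteq> {}" "Min (CG r) < fib (2 * p + 2)"
    using CG_empty_iff Min_CG_less[OF _ assms(1)] by simp_all
  then show ?thesis using assms(2) Min_insert[OF finite_CG] False by simp
qed (use assms(2) CG_empty_iff[of 0] in simp)

lemma A2k_ge:
  assumes "n \<in> A2k k"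
  shows "fib (2 * k) \<le> n"
proof -
  have "CG n \<noteq> {}" using assms CG_empty_iff unfolding A2k_def by simp
  then have "Min (CG n) \<le> n" using CG_le Min_in[OF finite_CG] by blast
  then show ?thesis using assms unfolding A2k_def by simp
qed

lemma A2k_insert:
  assumes "1 \<le> k" "k \<le> p" "r < fib (2 * p + 2)" "CG s = insert (fib (2 * p + 2)) (CG r)"
  shows "s \<in> A2k k \<longleftrightarrow> r \<in> A2k k"
proof -
  have "CG s \<noteq> {}" using assms(4) by simp
  then have "s \<noteq> 0" using CG_empty_iff by simp
  moreover have "fib (2 * k) < fib (2 * p + 2)" using fib_even_less[of k "Suc p"] assms(1,2) by simp
  ultimately show ?thesis using Min_CG_insert[OF assms(3,4)] unfolding A2k_def by auto
qed

lemma A2k_insert_top: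
  assumes "r < fib (2 * p + 2)" "CG s = insert (fib (2 * p + 2)) (CG r)"
  shows "s \<in> A2k (Suc p) \<longleftrightarrow> r = 0"
proof -
  have "CG s \<noteq> {}" using assms(2) by simp
  then have "s \<noteq> 0" using CG_empty_iff by simp
  then show ?thesis using Min_CG_insert[OF assms] Min_CG_less[OF _ assms(1)] unfolding A2k_def by auto
qed

subsection \<open>Counting elements below a bound\<close>

definition count_below :: "nat set \<Rightarrow> nat \<Rightarrow> nat" where
  "count_below A x = card {n \<in> A. n < x}"

lemma count_below_add:
  assumes "\<And>r. r < b \<Longrightarrow> r + a \<in> A \<longleftrightarrow> r \<in> B"
  shows "count_below A (a + b) = count_below A a + count_below B b"
proof -
  have "{n \<in> A. n < a + b} = {n \<in> A. n < a} \<union> (\<lambda>r. r + a) ` {r \<in> B. r < b}"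
  proof (intro equalityI subsetI)
    fix n assume n: "n \<in> {n \<in> A. n < a + b}"
    show "n \<in> {n \<in> A. n < a} \<union> (\<lambda>r. r + a) ` {r \<in> B. r < b}"
    proof (cases "n < a")
      case False
      then have "n - a < b" "n - a + a = n" using n by auto
      then have "n - a \<in> B" using assms[of "n - a"] n by simp
      then have "n - a \<in> {r \<in> B. r < b}" using \<open>n - a < b\<close> by simp
      then have "n - a + a \<in> (\<lambda>r. r + a) ` {r \<in> B. r < b}" by (rule imageI)
      then show ?thesis using \<open>n - a + a = n\<close> by simp
    qed (use n in simp)
  qed (use assms in auto)
  moreover have "finite {n \<in> A. n < a}" "finite {r \<in> B. r < b}" by simp_all
  moreover have "{n \<in> A. n < a} \<inter> (\<lambda>r. r + a) ` {r \<in> B. r < b} = {}" by auto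
  moreover have "inj_on (\<lambda>r. r + a) {r \<in> B. r < b}" by (simp add: inj_on_def)
  ultimately show ?thesis unfolding count_below_def by (simp add: card_Un_disjoint card_image)
qed

lemma count_below_singleton_0:
  assumes "0 < x"
  shows "count_below {0} x = 1"
proof -
  have "{n \<in> {0}. n < x} = {0}" using assms by auto
  then show ?thesis by (simp add: count_below_def)
qed

lemma count_below_less_iff:
  assumes "n \<in> S"
  shows "count_below S n < count_below S b \<longleftrightarrow> n < b"
proof
  assume "n < b"
  then have "{m \<in> S. m < n} \<subset> {m \<in> S. m < b}" using assms by auto
  then show "count_below S n < count_below S b" unfolding count_below_def by (simp add: psubset_card_mono)
next
  assume "count_below S n < count_below S b"
  moreover have "b \<le> n \<Longrightarrow> count_below S b \<le> count_below S n"
    unfolding count_below_def by (intro card_mono) auto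
  ultimately show "n < b" by linarith
qed

lemma count_below_enumerate:
  assumes "infinite S"
  shows "count_below S (enumerate S i) = i"
proof -
  have "{n \<in> S. n < enumerate S i} = enumerate S ` {..<i}"
  proof (intro equalityI subsetI)
    fix n assume n: "n \<in> {n \<in> S. n < enumerate S i}"
    then obtain j where "enumerate S j = n" using enumerate_Ex[OF assms] by blast
    with n assms show "n \<in> enumerate S ` {..<i}" by auto
  qed (use assms enumerate_in_set in auto)
  then show ?thesis
    unfolding count_below_def using inj_enumerate[OF assms] by (simp add: card_image inj_on_subset)
qed

lemma interval_eq_enumerate_image:
  fixes S :: "nat set"
  assumes "infinite S"
  shows "{n \<in> S. a \<le> n \<and> n < b} = enumerate S ` {count_below S a..<count_below S b}"
proof (intro equalityI subsetI)
  fix n assume n: "n \<in> {n \<in> S. a \<le> n \<and> n < b}"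
  then obtain i where i: "enumerate S i = n" using enumerate_Ex[OF assms] by blast
  then have "count_below S n = i" using count_below_enumerate[OF assms] by blast
  with n count_below_less_iff[of n S] have "i \<in> {count_below S a..<count_below S b}"
    by (auto simp: not_less[symmetric])
  with i show "n \<in> enumerate S ` {count_below S a..<count_below S b}" by blast
next
  fix n assume "n \<in> enumerate S ` {count_below S a..<count_below S b}"
  then obtain i where "i \<in> {count_below S a..<count_below S b}" "n = enumerate S i" by (rule imageE)
  then have i: "count_below S a \<le> i" "i < count_below S b" and "n \<in> S" "count_below S n = i"
    using enumerate_in_set[OF assms] count_below_enumerate[OF assms] by auto
  with i count_below_less_iff[of n S] show "n \<in> {n \<in> S. a \<le> n \<and> n < b}"
    by (auto simp: not_less[symmetric])
qed

lemma count_below_fib_rec: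
  assumes "\<And>r. r < fib (2 * p + 2) \<Longrightarrow> r + fib (2 * p + 2) \<in> A \<longleftrightarrow> r \<in> B"
    and "\<And>r. r < fib (2 * p + 1) \<Longrightarrow> r + 2 * fib (2 * p + 2) \<in> A \<longleftrightarrow> r \<in> B"
  shows "count_below A (fib (2 * p + 3)) = count_below A (fib (2 * p + 2)) + count_below B (fib (2 * p + 1))"
    and "count_below A (fib (2 * p + 4)) =
      count_below A (fib (2 * p + 2)) + count_below B (fib (2 * p + 2)) + count_below B (fib (2 * p + 1))"
proof -
  let ?F = "fib (2 * p + 2)"
  have odd: "fib (2 * p + 3) = ?F + fib (2 * p + 1)" and even: "fib (2 * p + 4) = 2 * ?F + fib (2 * p + 1)"
    by (simp_all add: numeral_eq_Suc)
  have "fib (2 * p + 1) \<le> ?F" by (simp add: fib_mono)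
  then show "count_below A (fib (2 * p + 3)) = count_below A ?F + count_below B (fib (2 * p + 1))"
    unfolding odd by (intro count_below_add assms(1)) linarith
  have "count_below A (2 * ?F) = count_below A ?F + count_below B ?F"
    unfolding mult_2[of ?F] by (rule count_below_add[OF assms(1)])
  moreover have "count_below A (fib (2 * p + 4)) = count_below A (2 * ?F) + count_below B (fib (2 * p + 1))"
    unfolding even by (rule count_below_add[OF assms(2)])
  ultimately show "count_below A (fib (2 * p + 4)) =
      count_below A ?F + count_below B ?F + count_below B (fib (2 * p + 1))"
    by simp
qed

subsection \<open>Counting \<open>A\<^sub>2\<^sub>k\<close> below Fibonacci numbers\<close>

lemma count_below_A2k_rec:
  assumes "1 \<le> k" "k \<le> p"
  shows "count_below (A2k k) (fib (2 * p + 3)) =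
      count_below (A2k k) (fib (2 * p + 2)) + count_below (A2k k) (fib (2 * p + 1))"
    and "count_below (A2k k) (fib (2 * p + 4)) =
      2 * count_below (A2k k) (fib (2 * p + 2)) + count_below (A2k k) (fib (2 * p + 1))"
proof -
  have one: "r + fib (2 * p + 2) \<in> A2k k \<longleftrightarrow> r \<in> A2k k" if "r < fib (2 * p + 2)" for r
    using A2k_insert[OF assms that CG_add_fib[OF that]] .
  have two: "r + 2 * fib (2 * p + 2) \<in> A2k k \<longleftrightarrow> r \<in> A2k k" if "r < fib (2 * p + 1)" for r
  proof -
    have "r < fib (2 * p + 2)" using that fib_mono[of "2 * p + 1" "2 * p + 2"] by linarith
    then show ?thesis using A2k_insert[OF assms _ CG_add_two_fib[OF that]] by blast
  qed
  show "count_below (A2k k) (fib (2 * p + 3)) =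
      count_below (A2k k) (fib (2 * p + 2)) + count_below (A2k k) (fib (2 * p + 1))"
    by (rule count_below_fib_rec(1)[OF one two])
  show "count_below (A2k k) (fib (2 * p + 4)) =
      2 * count_below (A2k k) (fib (2 * p + 2)) + count_below (A2k k) (fib (2 * p + 1))"
    using count_below_fib_rec(2)[OF one two] by linarith
qed

text \<open>For \<open>p + 1 = k\<close> the shifted numbers lie in \<open>A\<^sub>2\<^sub>k\<close> only for \<open>r = 0\<close>, so the recurrence
  holds with \<open>{0}\<close> in place of \<open>A\<^sub>2\<^sub>k\<close>.\<close>

lemma count_below_A2k_base:
  shows "count_below (A2k (Suc p)) (fib (2 * p + 3)) = 1"
    and "count_below (A2k (Suc p)) (fib (2 * p + 4)) = 2"
proof -
  let ?A = "A2k (Suc p)"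
  have one: "r + fib (2 * p + 2) \<in> ?A \<longleftrightarrow> r \<in> {0}" if "r < fib (2 * p + 2)" for r
    using A2k_insert_top[OF that CG_add_fib[OF that]] by simp
  have two: "r + 2 * fib (2 * p + 2) \<in> ?A \<longleftrightarrow> r \<in> {0}" if "r < fib (2 * p + 1)" for r
  proof -
    have "r < fib (2 * p + 2)" using that fib_mono[of "2 * p + 1" "2 * p + 2"] by linarith
    then show ?thesis using A2k_insert_top[OF _ CG_add_two_fib[OF that]] by simp
  qed
  have "count_below ?A (fib (2 * p + 2)) = 0"
    using A2k_ge[of _ "Suc p"] unfolding count_below_def by fastforce
  moreover have "count_below {0} (fib (2 * p + 1)) = 1" "count_below {0} (fib (2 * p + 2)) = 1"
    by (simp_all add: count_below_singleton_0 fib_neq_0_nat del: fib2)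
  ultimately show "count_below ?A (fib (2 * p + 3)) = 1" "count_below ?A (fib (2 * p + 4)) = 2"
    using count_below_fib_rec[OF one two] by simp_all
qed

lemma count_below_A2k_fib:
  assumes "1 \<le> k"
  shows "count_below (A2k k) (fib (2 * k + 2 * l + 1)) = fib (2 * l + 2) \<and>
    count_below (A2k k) (fib (2 * k + 2 * l + 2)) = fib (2 * l + 3)"
proof (induction l)
  case 0
  obtain p where "k = Suc p" using assms by (cases k) auto
  then show ?case using count_below_A2k_base[of p] by (simp add: numeral_eq_Suc)
next
  case (Suc l)
  let ?p = "k + l"
  have idx: "2 * k + 2 * Suc l + 1 = 2 * ?p + 3" "2 * k + 2 * Suc l + 2 = 2 * ?p + 4"
    "2 * k + 2 * l + 1 = 2 * ?p + 1" "2 * k + 2 * l + 2 = 2 * ?p + 2" by simp_all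
  have "fib (2 * Suc l + 2) = fib (2 * l + 3) + fib (2 * l + 2)"
    "fib (2 * Suc l + 3) = 2 * fib (2 * l + 3) + fib (2 * l + 2)" by (simp_all add: numeral_eq_Suc)
  with Suc count_below_A2k_rec[OF assms, of ?p] show ?case unfolding idx by simp
qed

lemma infinite_A2k:
  assumes "1 \<le> k"
  shows "infinite (A2k k)"
proof
  assume fin: "finite (A2k k)"
  let ?l = "card (A2k k)"
  have "fib (2 * ?l + 3) = count_below (A2k k) (fib (2 * k + 2 * ?l + 2))"
    using count_below_A2k_fib[OF assms] by simp
  also have "\<dots> \<le> ?l" unfolding count_below_def using fin by (intro card_mono) auto
  finally show False using less_fib_even[of ?l] fib_mono[of "2 * ?l + 2" "2 * ?l + 3"] by linarith
qed

theorem lemma3p3: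
  fixes k l :: nat
  assumes "k \<ge> 1" and "l \<ge> 1"
  shows "{n \<in> A2k k. Max (CG n) = fib (2 * k + 2 * l)} =
         {q k j | j. fib (2 * l + 1) + 1 \<le> j \<and> j \<le> fib (2 * l + 3)}"
proof -
  let ?A = "A2k k"
  obtain l' where l: "l = Suc l'" using assms(2) by (cases l) auto
  have lo: "count_below ?A (fib (2 * k + 2 * l)) = fib (2 * l + 1)"
    using count_below_A2k_fib[OF assms(1), of l'] l by (simp add: numeral_eq_Suc)
  have hi: "count_below ?A (fib (2 * k + 2 * l + 2)) = fib (2 * l + 3)"
    using count_below_A2k_fib[OF assms(1), of l] by simp
  have "{n \<in> ?A. Max (CG n) = fib (2 * k + 2 * l)} =
      {n \<in> ?A. fib (2 * k + 2 * l) \<le> n \<and> n < fib (2 * k + 2 * l + 2)}"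
    using Max_CG_eq_fib_iff[of "k + l"] assms unfolding A2k_def by (auto simp: algebra_simps)
  also have "\<dots> = enumerate ?A ` {fib (2 * l + 1)..<fib (2 * l + 3)}"
    using interval_eq_enumerate_image[OF infinite_A2k[OF assms(1)]] lo hi by simp
  also have "\<dots> = {q k j | j. fib (2 * l + 1) + 1 \<le> j \<and> j \<le> fib (2 * l + 3)}"
    unfolding q_def by (force intro: image_eqI[where x = "_ - 1"])
  finally show ?thesis .
qed

end
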